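(* Let $M$ be a Kähler QCH-manifold of real dimension $2n$ with curvature $\bar R=a\pi+b\Phi+c\Psi$, and let $N$ be a Lagrangian submanifold of $M$ of real dimension $n\geq 2$. Then for every $p\in N$ and every unit vector $X\in T_pN$, $$\mathrm{Ric}(X)\leq \frac{n-1}{4}a+\frac18\{(n-2)[\eta(X)^2+\tilde\eta(X)^2]+1\}b+\|\eta(X)\tilde\eta^{\top}-\tilde\eta(X)\eta^{\top}\|^2c+\frac{(n-1)n}{4}\|H\|^2,$$ where $a,b,c$ are evaluated at $p$. Equality holds for all unit vectors $X\in T_pN$ if and only if either (i) $p$ is a totally geodesic point of $N$, or (ii) $n=2$ and $p$ is an $H$-umbilical point with $\lambda=3\mu$, i.e. there is an orthonormal basis $\{e_1,e_2\}$ of $T_pN$ and a real number $\mu$ with $h(e_1,e_1)=3\mu Je_1$, $h(e_2,e_2)=\mu Je_1$, $h(e_1,e_2)=\mu Je_2$.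
   Context: A Kähler QCH-manifold (Kähler manifold of quasi-constant holomorphic sectional curvatures) is a Kähler manifold $(M,g,J,D)$ of real dimension $2n\geq 4$ with a $J$-invariant distribution $D$ of codimension 2, together with a local unit vector field $\xi$ such that $D^\perp=\mathrm{span}\{\xi,J\xi\}$, whose curvature tensor satisfies $\bar R=a\pi+b\Phi+c\Psi$ for functions $a,b,c$ on $M$. Here $\bar R(X,Y,Z,U)=g(\bar R(X,Y)Z,U)$ with $\bar R(X,Y)Z=\bar\nabla_X\bar\nabla_YZ-\bar\nabla_Y\bar\nabla_XZ-\bar\nabla_{[X,Y]}Z$; $\eta(X)=g(\xi,X)$, $\tilde\eta(X)=g(J\xi,X)$; and $4\pi(X,Y,Z,U)=g(Y,Z)g(X,U)-g(X,Z)g(Y,U)+g(JY,Z)g(JX,U)-g(JX,Z)g(JY,U)-2g(JX,Y)g(JZ,U)$; $8\Phi(X,Y,Z,U)=g(Y,Z)\{\eta(X)\eta(U)+\tilde\eta(X)\tilde\eta(U)\}-g(X,Z)\{\eta(Y)\eta(U)+\tilde\eta(Y)\tilde\eta(U)\}+g(X,U)\{\eta(Y)\eta(Z)+\tilde\eta(Y)\tilde\eta(Z)\}-g(Y,U)\{\eta(X)\eta(Z)+\tilde\eta(X)\tilde\eta(Z)\}+g(JY,Z)\{\eta(X)\tilde\eta(U)-\eta(U)\tilde\eta(X)\}-g(JX,Z)\{\eta(Y)\tilde\eta(U)-\eta(U)\tilde\eta(Y)\}+g(JX,U)\{\eta(Y)\tilde\eta(Z)-\eta(Z)\tilde\eta(Y)\}-g(JY,U)\{\eta(X)\tilde\eta(Z)-\eta(Z)\tilde\eta(X)\}-2g(JX,Y)\{\eta(Z)\tilde\eta(U)-\eta(U)\tilde\eta(Z)\}-2g(JZ,U)\{\eta(X)\tilde\eta(Y)-\eta(Y)\tilde\eta(X)\}$;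 $\Psi(X,Y,Z,U)=\eta(Y)\eta(Z)\tilde\eta(X)\tilde\eta(U)-\eta(X)\eta(Z)\tilde\eta(Y)\tilde\eta(U)+\eta(X)\eta(U)\tilde\eta(Y)\tilde\eta(Z)-\eta(Y)\eta(U)\tilde\eta(X)\tilde\eta(Z)$. A submanifold $N$ of real dimension $n$ is Lagrangian if $J$ maps each $T_pN$ onto the normal space $T_pN^\perp$. $h$ is the second fundamental form, $H=\frac1n\sum_{i=1}^n h(e_i,e_i)$ the mean curvature vector ($\{e_i\}$ an orthonormal basis of $T_pN$); $p$ is totally geodesic if $h=0$ at $p$. The curvature $R$ of $N$ uses the same sign convention; the sectional curvature is $K(e_i\wedge e_j)=R(e_i,e_j,e_j,e_i)$, and for a unit $X=e_1\in T_pN$, $\mathrm{Ric}(X)=\sum_{i=2}^n K(e_1\wedge e_i)$. $\eta^\top,\tilde\eta^\top$ denote the orthogonal projections onto $T_pN$ of the vectors $\xi$, $J\xi$ (the metric duals of $\eta,\tilde\eta$), and $\|\cdot\|$ is the norm induced by $g$. *)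

theory Defs
  imports "HOL-Analysis.Analysis"
begin

text \<open>Pointwise (linear-algebraic) model at a point p of N.
  The ambient tangent space T_pM is a Euclidean space 'a with complex structure J;
  the tangent space T_pN is a subspace L; xi is the unit vector spanning (with J xi)
  the orthogonal complement of D at p.\<close>

definition eta :: "'a::real_inner \<Rightarrow> 'a \<Rightarrow> real" where
  "eta xi X = inner xi X"

definition eta_t :: "('a::real_inner \<Rightarrow> 'a) \<Rightarrow> 'a \<Rightarrow> 'a \<Rightarrow> real" where
  "eta_t J xi X = inner (J xi) X"

definition pi_t :: "('a::real_inner \<Rightarrow> 'a) \<Rightarrow> 'a \<Rightarrow> 'a \<Rightarrow> 'a \<Rightarrow> 'a \<Rightarrow> real" where
  "pi_t J X Y Z U = (1/4) * (inner Y Z * inner X U - inner X Z * inner Y U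
     + inner (J Y) Z * inner (J X) U - inner (J X) Z * inner (J Y) U
     - 2 * inner (J X) Y * inner (J Z) U)"

definition Phi_t :: "('a::real_inner \<Rightarrow> 'a) \<Rightarrow> 'a \<Rightarrow> 'a \<Rightarrow> 'a \<Rightarrow> 'a \<Rightarrow> 'a \<Rightarrow> real" where
  "Phi_t J xi X Y Z U = (let e = eta xi; f = eta_t J xi in (1/8) * (
       inner Y Z * (e X * e U + f X * f U)
     - inner X Z * (e Y * e U + f Y * f U)
     + inner X U * (e Y * e Z + f Y * f Z)
     - inner Y U * (e X * e Z + f X * f Z)
     + inner (J Y) Z * (e X * f U - e U * f X)
     - inner (J X) Z * (e Y * f U - e U * f Y)
     + inner (J X) U * (e Y * f Z - e Z * f Y)
     - inner (J Y) U * (e X * f Z - e Z * f X)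
     - 2 * inner (J X) Y * (e Z * f U - e U * f Z)
     - 2 * inner (J Z) U * (e X * f Y - e Y * f X)))"

definition Psi_t :: "('a::real_inner \<Rightarrow> 'a) \<Rightarrow> 'a \<Rightarrow> 'a \<Rightarrow> 'a \<Rightarrow> 'a \<Rightarrow> 'a \<Rightarrow> real" where
  "Psi_t J xi X Y Z U = (let e = eta xi; f = eta_t J xi in
       e Y * e Z * f X * f U - e X * e Z * f Y * f U
     + e X * e U * f Y * f Z - e Y * e U * f X * f Z)"

definition Rbar :: "real \<Rightarrow> real \<Rightarrow> real \<Rightarrow> ('a::real_inner \<Rightarrow> 'a) \<Rightarrow> 'a \<Rightarrow> 'a \<Rightarrow> 'a \<Rightarrow> 'a \<Rightarrow> 'a \<Rightarrow> real" where
  "Rbar a b c J xi X Y Z U = a * pi_t J X Y Z U + b * Phi_t J xi X Y Z U + c * Psi_t J xi X Y Z U"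

text \<open>Orthonormal family e 0, ..., e (n-1) in L (an orthonormal basis when dim L = n).\<close>
definition onb :: "'a::real_inner set \<Rightarrow> nat \<Rightarrow> (nat \<Rightarrow> 'a) \<Rightarrow> bool" where
  "onb L n e \<longleftrightarrow> (\<forall>i<n. e i \<in> L) \<and> (\<forall>i<n. \<forall>j<n. inner (e i) (e j) = (if i = j then 1 else 0))"

text \<open>Ric(X) = sum of K(e_1 /\ e_i), i = 2..n, for an orthonormal basis with e_1 = X
  (indices shifted to 0..n-1).\<close>
definition Ric :: "'a::real_inner set \<Rightarrow> nat \<Rightarrow> ('a \<Rightarrow> 'a \<Rightarrow> 'a \<Rightarrow> 'a \<Rightarrow> real) \<Rightarrow> 'a \<Rightarrow> real" where
  "Ric L n R X = (let e = (SOME e. onb L n e \<and> e 0 = X) in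
     (\<Sum>i\<in>{1..<n}. R (e 0) (e i) (e i) (e 0)))"

definition mean_curv :: "'a::real_inner set \<Rightarrow> nat \<Rightarrow> ('a \<Rightarrow> 'a \<Rightarrow> 'a) \<Rightarrow> 'a" where
  "mean_curv L n h = (let e = (SOME e. onb L n e) in
     (1 / real n) *\<^sub>R (\<Sum>i<n. h (e i) (e i)))"

definition tproj :: "'a::real_inner set \<Rightarrow> 'a \<Rightarrow> 'a" where
  "tproj L v = (THE w. w \<in> L \<and> (\<forall>x\<in>L. inner (v - w) x = 0))"

end

theory Submission
  imports Defs
begin

text \<open>Take an orthonormal basis \<open>e\<^sub>0 = X, e\<^sub>1, \<dots>, e\<^sub>n\<^sub>-\<^sub>1\<close> of \<open>T\<^sub>pN\<close>; since \<open>N\<close> is Lagrangian,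
  \<open>e\<^sub>i, Je\<^sub>i\<close> is an orthonormal basis of \<open>T\<^sub>pM\<close>. By the Gauss equation, \<open>Ric(X)\<close> splits into
  the ambient part, which Parseval's identity for \<open>\<xi>\<close> turns into exactly the \<open>a\<close>, \<open>b\<close>, \<open>c\<close> terms
  of the bound, and a part quadratic in the totally symmetric coefficients
  \<open>h\<^sub>i\<^sub>j\<^sup>k = \<langle>h(e\<^sub>i,e\<^sub>j), Je\<^sub>k\<rangle>\<close>. The latter equals \<open>n(n-1)/4 \<parallel>H\<parallel>\<^sup>2\<close> minus a defect which,
  after completing squares separately in each normal direction \<open>Je\<^sub>k\<close>, is a sum of squares.
  Its vanishing forces \<open>h(X,X) = 0\<close> for every unit \<open>X\<close> when \<open>n \<ge> 3\<close>, and when \<open>n = 2\<close>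
  it says that in the basis \<open>e\<^sub>0, e\<^sub>1\<close> the cubic form has the shape
  \<open>(3\<gamma>, \<beta>, \<gamma>, 3\<beta>)\<close>; rotating \<open>e\<^sub>0\<close> to \<open>\<gamma>e\<^sub>0 + \<beta>e\<^sub>1\<close> gives the \<open>H\<close>-umbilical form with \<open>\<lambda> = 3\<mu>\<close>.\<close>

section \<open>Orthonormal bases of a subspace\<close>

lemma onb_inner: "onb L n e \<Longrightarrow> i < n \<Longrightarrow> j < n \<Longrightarrow> inner (e i) (e j) = (if i = j then 1 else 0)"
  by (simp add: onb_def)

lemma onb_in: "onb L n e \<Longrightarrow> i < n \<Longrightarrow> e i \<in> L"
  by (simp add: onb_def)

lemma onb_inner_sum_scaleR:
  assumes "onb L n e" "j < n"
  shows "inner (\<Sum>i<n. f i *\<^sub>R e i) (e j) = f j"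
proof -
  have "inner (\<Sum>i<n. f i *\<^sub>R e i) (e j) = (\<Sum>i<n. f i * inner (e i) (e j))"
    by (simp add: inner_sum_left)
  also have "\<dots> = (\<Sum>i<n. if i = j then f i else 0)"
    by (rule sum.cong) (use assms in \<open>auto simp: onb_inner\<close>)
  also have "\<dots> = f j" using assms(2) by simp
  finally show ?thesis .
qed

lemma norm_sum_scaleR_onb:
  assumes "onb L n e"
  shows "(norm (\<Sum>i<n. f i *\<^sub>R e i))\<^sup>2 = (\<Sum>i<n. (f i)\<^sup>2)"
proof -
  have "(norm (\<Sum>i<n. f i *\<^sub>R e i))\<^sup>2 = (\<Sum>j<n. f j * inner (\<Sum>i<n. f i *\<^sub>R e i) (e j))"
    by (simp add: power2_norm_eq_inner inner_sum_right)
  also have "\<dots> = (\<Sum>j<n. (f j)\<^sup>2)"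
    by (rule sum.cong) (use assms in \<open>auto simp: onb_inner_sum_scaleR power2_eq_square\<close>)
  finally show ?thesis .
qed

lemma span_onb:
  fixes L :: "'a::euclidean_space set"
  assumes "subspace L" "dim L = n" "onb L n e"
  shows "span (e ` {..<n}) = L"
proof -
  have "inj_on e {..<n}"
    using assms(3) by (intro inj_onI) (metis lessThan_iff onb_inner zero_neq_one)
  then have card: "card (e ` {..<n}) = dim L" using assms(2) by (simp add: card_image)
  have indep: "independent (e ` {..<n})"
    by (rule pairwise_orthogonal_independent)
       (use assms(3) in \<open>auto simp: pairwise_def orthogonal_def onb_def, metis inner_zero_left zero_neq_one\<close>)
  have sub: "e ` {..<n} \<subseteq> L" using assms(3) by (auto simp: onb_def)
  then show ?thesis
    using card_eq_dim[OF sub card] indep span_minimal[OF sub assms(1)] by auto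
qed

lemma inner_eq_0_if_orthogonal_onb:
  fixes L :: "'a::euclidean_space set"
  assumes "subspace L" "dim L = n" "onb L n e" "\<And>j. j < n \<Longrightarrow> inner y (e j) = 0" "x \<in> L"
  shows "inner y x = 0"
proof -
  have "x \<in> span (e ` {..<n})" using span_onb assms by auto
  then have "orthogonal y x"
    by (rule orthogonal_to_span) (use assms(4) in \<open>auto simp: orthogonal_def\<close>)
  then show ?thesis by (simp add: orthogonal_def)
qed

lemma onb_expansion:
  fixes L :: "'a::euclidean_space set"
  assumes "subspace L" "dim L = n" "onb L n e" "x \<in> L"
  shows "x = (\<Sum>i<n. inner x (e i) *\<^sub>R e i)"
proof -
  let ?y = "x - (\<Sum>i<n. inner x (e i) *\<^sub>R e i)"
  have "inner ?y (e j) = 0" if "j < n" for j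
    using onb_inner_sum_scaleR[OF assms(3) that] by (simp add: inner_diff_left)
  moreover have "?y \<in> L"
    by (intro subspace_diff[OF assms(1) assms(4)] subspace_sum[OF assms(1)] subspace_scale[OF assms(1)])
       (use assms(3) in \<open>auto simp: onb_def\<close>)
  ultimately have "inner ?y ?y = 0" by (rule inner_eq_0_if_orthogonal_onb[OF assms(1-3)])
  then show ?thesis by simp
qed

lemma onb_parseval:
  fixes L :: "'a::euclidean_space set"
  assumes "subspace L" "dim L = n" "onb L n e" "x \<in> L"
  shows "inner x y = (\<Sum>i<n. inner x (e i) * inner (e i) y)"
  by (subst onb_expansion[OF assms]) (simp add: inner_sum_left)

lemma onb_of_orthonormal_set:
  assumes "B \<subseteq> L" "pairwise orthogonal B" "\<And>x. x \<in> B \<Longrightarrow> norm x = 1" "finite B" "card B = n"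
  obtains e where "onb L n e" "e ` {..<n} = B"
proof -
  obtain e where e: "bij_betw e {0..<n} B"
    using ex_bij_betw_nat_finite[OF assms(4)] assms(5) by metis
  have "onb L n e"
    unfolding onb_def
  proof (intro conjI allI impI)
    fix i j assume "i < n" "j < n"
    then have "e i \<in> B" "e j \<in> B" "e i = e j \<longleftrightarrow> i = j"
      using e by (auto simp: bij_betw_def inj_on_eq_iff)
    then show "inner (e i) (e j) = (if i = j then 1 else 0)"
      using assms(2,3) by (auto simp: pairwise_def orthogonal_def norm_eq_1)
  qed (use e assms(1) in \<open>auto simp: bij_betw_def\<close>)
  moreover have "e ` {..<n} = B" using e by (simp add: bij_betw_def lessThan_atLeast0)
  ultimately show ?thesis by (rule that)
qed

lemma onb_reindex:
  assumes "onb L n e" "inj_on p {..<n}" "\<And>i. i < n \<Longrightarrow> p i < n"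
  shows "onb L n (e \<circ> p)"
  using assms by (auto simp: onb_def inj_on_eq_iff)

lemma onb_exists:
  fixes L :: "'a::euclidean_space set"
  assumes "subspace L" "dim L = n"
  obtains e where "onb L n e"
proof -
  obtain B where "B \<subseteq> L" "pairwise orthogonal B" "\<And>x. x \<in> B \<Longrightarrow> norm x = 1"
    "independent B" "card B = n"
    using orthonormal_basis_subspace[OF assms(1)] assms(2) by metis
  then show ?thesis
    using onb_of_orthonormal_set[of B L n] finiteI_independent that by metis
qed

lemma orthonormal_basis_containing:
  fixes L :: "'a::euclidean_space set"
  assumes L: "subspace L" and X: "X \<in> L" "norm X = 1"
  obtains B where "X \<in> B" "B \<subseteq> L" "pairwise orthogonal B" "\<And>x. x \<in> B \<Longrightarrow> norm x = 1"
    "finite B" "card B = dim L"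
proof -
  let ?S = "{y \<in> L. inner X y = 0}"
  have "subspace ?S" using L by (auto simp: subspace_def inner_add_right)
  then obtain B where B: "B \<subseteq> ?S" "pairwise orthogonal B" "\<And>x. x \<in> B \<Longrightarrow> norm x = 1" "span B = ?S"
    by (rule orthonormal_basis_subspace) blast
  have XX: "inner X X = 1" using X(2) by (simp add: norm_eq_1)
  have orth: "pairwise orthogonal (insert X B)"
    using B(1,2) by (auto simp: pairwise_insert orthogonal_def inner_commute)
  have indep: "independent (insert X B)"
    by (rule pairwise_orthogonal_independent[OF orth]) (use X(2) B(3) in force)
  have "L \<subseteq> span (insert X B)"
  proof
    fix y assume "y \<in> L"
    then have "y - inner X y *\<^sub>R X \<in> span B"
      using L X(1) XX B(4) by (auto simp: subspace_diff subspace_scale inner_diff_right)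
    then have "(y - inner X y *\<^sub>R X) + inner X y *\<^sub>R X \<in> span (insert X B)"
      by (meson span_add span_base span_mono span_scale insertI1 subset_insertI subsetD)
    then show "y \<in> span (insert X B)" by simp
  qed
  moreover have "span (insert X B) \<subseteq> L"
    using L X(1) B(1) by (intro span_minimal) auto
  ultimately have "span (insert X B) = L" by blast
  then have "card (insert X B) = dim L"
    using dim_span_eq_card_independent[OF indep] by simp
  moreover have "insert X B \<subseteq> L" using B(1) X(1) by auto
  ultimately show ?thesis
    using that[of "insert X B"] B(3) X(2) orth finiteI_independent[OF indep] by blast
qed

lemma onb_exists_first:
  fixes L :: "'a::euclidean_space set"
  assumes "subspace L" "dim L = n" "X \<in> L" "norm X = 1"
  shows "\<exists>e. onb L n e \<and> e 0 = X"
proof -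
  obtain B where "X \<in> B" "B \<subseteq> L" "pairwise orthogonal B" "\<And>x. x \<in> B \<Longrightarrow> norm x = 1"
    "finite B" "card B = n"
    using orthonormal_basis_containing[OF assms(1,3,4)] assms(2) by metis
  then obtain e where e: "onb L n e" "e ` {..<n} = B"
    using onb_of_orthonormal_set by metis
  then obtain k where k: "k < n" "e k = X" using \<open>X \<in> B\<close> by auto
  then have "0 < n" by simp
  define p where "p i = (if i = 0 then k else if i = k then 0 else i)" for i
  have "onb L n (e \<circ> p)"
    by (rule onb_reindex[OF e(1)]) (use k \<open>0 < n\<close> in \<open>auto simp: p_def inj_on_def\<close>)
  moreover have "(e \<circ> p) 0 = X" using k by (simp add: p_def)
  ultimately show ?thesis by blast
qed

section \<open>The defect form\<close>

text \<open>\<open>c i j k\<close> stands for \<open>h\<^sub>i\<^sub>j\<^sup>k\<close> in a basis with \<open>e\<^sub>0 = X\<close>; the Ricci curvature \<open>Ric(X)\<close> falls short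
  of the bound by exactly \<open>ric_defect n c\<close>.\<close>

definition ric_defect :: "nat \<Rightarrow> (nat \<Rightarrow> nat \<Rightarrow> nat \<Rightarrow> real) \<Rightarrow> real" where
  "ric_defect n c = (real n - 1) / (4 * real n) * (\<Sum>k<n. (\<Sum>i<n. c i i k)\<^sup>2)
     - (\<Sum>i\<in>{1..<n}. \<Sum>k<n. c 0 0 k * c i i k) + (\<Sum>i\<in>{1..<n}. \<Sum>k<n. (c 0 i k)\<^sup>2)"

definition defect_JX :: "nat \<Rightarrow> (nat \<Rightarrow> nat \<Rightarrow> nat \<Rightarrow> real) \<Rightarrow> real" where
  "defect_JX n c = (real n - 1) / (4 * real n) * (c 0 0 0 + (\<Sum>i\<in>{1..<n}. c i i 0))\<^sup>2
     - c 0 0 0 * (\<Sum>i\<in>{1..<n}. c i i 0) + (\<Sum>k\<in>{1..<n}. (c k k 0)\<^sup>2)"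

definition defect_Je :: "nat \<Rightarrow> (nat \<Rightarrow> nat \<Rightarrow> nat \<Rightarrow> real) \<Rightarrow> nat \<Rightarrow> real" where
  "defect_Je n c k = (real n - 1) / (4 * real n) * (c 0 0 k + (\<Sum>i\<in>{1..<n}. c i i k))\<^sup>2
     - c 0 0 k * (\<Sum>i\<in>{1..<n}. c i i k) + (c 0 0 k)\<^sup>2"

definition defect_mixed :: "nat \<Rightarrow> (nat \<Rightarrow> nat \<Rightarrow> nat \<Rightarrow> real) \<Rightarrow> nat \<Rightarrow> real" where
  "defect_mixed n c k = (\<Sum>i\<in>{1..<n} - {k}. (c 0 i k)\<^sup>2)"

lemma sum_lessThan_split_first: "0 < (n::nat) \<Longrightarrow> (\<Sum>i<n. f i) = f 0 + (\<Sum>i\<in>{1..<n}. f i)"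
  using sum.atLeast_Suc_lessThan[of 0 n f] by (simp add: atLeast0LessThan)

lemma ric_defect_decomposition:
  assumes n2: "2 \<le> n"
    and sym12: "\<And>i j k. i < n \<Longrightarrow> j < n \<Longrightarrow> k < n \<Longrightarrow> c i j k = c j i k"
    and sym23: "\<And>i j k. i < n \<Longrightarrow> j < n \<Longrightarrow> k < n \<Longrightarrow> c i j k = c i k j"
  shows "ric_defect n c = defect_JX n c + (\<Sum>k\<in>{1..<n}. defect_Je n c k) + (\<Sum>k\<in>{1..<n}. defect_mixed n c k)"
proof -
  have n0: "0 < n" using n2 by simp
  let ?a = "\<lambda>k. c 0 0 k" and ?s = "\<lambda>k. \<Sum>i\<in>{1..<n}. c i i k"
  have "(\<Sum>k<n. (\<Sum>i<n. c i i k)\<^sup>2) = (\<Sum>k<n. (?a k + ?s k)\<^sup>2)"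
    by (simp only: sum_lessThan_split_first[OF n0])
  also have "\<dots> = (?a 0 + ?s 0)\<^sup>2 + (\<Sum>k\<in>{1..<n}. (?a k + ?s k)\<^sup>2)"
    by (rule sum_lessThan_split_first[OF n0])
  finally have mean: "(\<Sum>k<n. (\<Sum>i<n. c i i k)\<^sup>2) = (?a 0 + ?s 0)\<^sup>2 + (\<Sum>k\<in>{1..<n}. (?a k + ?s k)\<^sup>2)" .
  have "(\<Sum>i\<in>{1..<n}. \<Sum>k<n. c 0 0 k * c i i k) = (\<Sum>k<n. ?a k * ?s k)"
    by (subst sum.swap) (simp add: sum_distrib_left)
  also have "\<dots> = ?a 0 * ?s 0 + (\<Sum>k\<in>{1..<n}. ?a k * ?s k)"
    by (rule sum_lessThan_split_first[OF n0])
  finally have cross: "(\<Sum>i\<in>{1..<n}. \<Sum>k<n. c 0 0 k * c i i k) = ?a 0 * ?s 0 + (\<Sum>k\<in>{1..<n}. ?a k * ?s k)" .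
  have "(\<Sum>i\<in>{1..<n}. \<Sum>k<n. (c 0 i k)\<^sup>2) = (\<Sum>k<n. \<Sum>i\<in>{1..<n}. (c 0 i k)\<^sup>2)"
    by (rule sum.swap)
  also have "\<dots> = (\<Sum>i\<in>{1..<n}. (c 0 i 0)\<^sup>2) + (\<Sum>k\<in>{1..<n}. \<Sum>i\<in>{1..<n}. (c 0 i k)\<^sup>2)"
    by (rule sum_lessThan_split_first[OF n0])
  also have "(\<Sum>i\<in>{1..<n}. (c 0 i 0)\<^sup>2) = (\<Sum>i\<in>{1..<n}. (?a i)\<^sup>2)"
    by (rule sum.cong) (use sym23 n0 in auto)
  also have "(\<Sum>k\<in>{1..<n}. \<Sum>i\<in>{1..<n}. (c 0 i k)\<^sup>2) = (\<Sum>k\<in>{1..<n}. (c k k 0)\<^sup>2 + defect_mixed n c k)"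
  proof (rule sum.cong)
    fix k assume k: "k \<in> {1..<n}"
    have "c 0 k k = c k k 0" using sym12[of 0 k k] sym23[of k 0 k] k by auto
    then show "(\<Sum>i\<in>{1..<n}. (c 0 i k)\<^sup>2) = (c k k 0)\<^sup>2 + defect_mixed n c k"
      using k by (simp add: sum.remove defect_mixed_def)
  qed simp
  finally have square: "(\<Sum>i\<in>{1..<n}. \<Sum>k<n. (c 0 i k)\<^sup>2)
      = (\<Sum>i\<in>{1..<n}. (?a i)\<^sup>2) + (\<Sum>k\<in>{1..<n}. (c k k 0)\<^sup>2 + defect_mixed n c k)" .
  show ?thesis
    unfolding ric_defect_def mean cross square defect_JX_def defect_Je_def
    by (simp add: sum.distrib sum_subtractf sum_distrib_left algebra_simps)
qed

lemma quadratic_form_identity: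
  fixes x u v :: real
  assumes "x \<ge> 2"
  shows "4*x*(x-1) * ((x-1)/(4*x)*(u+v)\<^sup>2 - u * v + u\<^sup>2) = 4*x*(x-2)*u\<^sup>2 + ((x-1) * v - (x+1) * u)\<^sup>2"
  using assms by (simp add: field_simps power2_eq_square)

lemma defect_Je_nonneg:
  assumes "2 \<le> n"
  shows "defect_Je n c k \<ge> 0"
proof -
  let ?x = "real n" and ?u = "c 0 0 k" and ?v = "\<Sum>i\<in>{1..<n}. c i i k"
  have x: "?x \<ge> 2" using assms by simp
  then have "4*?x*(?x-1) * defect_Je n c k \<ge> 0"
    unfolding defect_Je_def quadratic_form_identity[OF x] by simp
  moreover have "4*?x*(?x-1) > 0" using x by simp
  ultimately show ?thesis by (metis zero_le_mult_iff linorder_not_le)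
qed

lemma defect_Je_eq_0D:
  assumes "2 \<le> n" "defect_Je n c k = 0"
  shows "n > 2 \<Longrightarrow> c 0 0 k = 0"
    and "(real n - 1) * (\<Sum>i\<in>{1..<n}. c i i k) = (real n + 1) * c 0 0 k"
proof -
  let ?x = "real n" and ?u = "c 0 0 k" and ?v = "\<Sum>i\<in>{1..<n}. c i i k"
  have x: "?x \<ge> 2" using assms by simp
  have "4*?x*(?x-2)*?u\<^sup>2 + ((?x-1)*?v - (?x+1)*?u)\<^sup>2 = 0"
    using quadratic_form_identity[OF x, of ?u ?v] assms(2) by (simp add: defect_Je_def)
  moreover have "4*?x*(?x-2)*?u\<^sup>2 \<ge> 0" using x by simp
  ultimately have "4*?x*(?x-2)*?u\<^sup>2 = 0" "((?x-1)*?v - (?x+1)*?u)\<^sup>2 = 0"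
    by (simp_all add: add_nonneg_eq_0_iff)
  then show "n > 2 \<Longrightarrow> ?u = 0" "(?x-1)*?v = (?x+1)*?u" by auto
qed

lemma sum_squares_mean_variance:
  fixes b :: "nat \<Rightarrow> real"
  assumes "finite S" "S \<noteq> {}"
  shows "(\<Sum>k\<in>S. (b k)\<^sup>2) = (\<Sum>k\<in>S. b k)\<^sup>2 / real (card S) + (\<Sum>k\<in>S. (b k - (\<Sum>j\<in>S. b j) / real (card S))\<^sup>2)"
proof -
  let ?s = "\<Sum>j\<in>S. b j" and ?N = "real (card S)"
  have N: "?N > 0" using assms by (simp add: card_gt_0_iff)
  have "(\<Sum>k\<in>S. (b k - ?s / ?N)\<^sup>2) = (\<Sum>k\<in>S. (b k)\<^sup>2 - 2 * (?s/?N) * b k + (?s/?N)\<^sup>2)"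
    by (simp add: power2_diff algebra_simps)
  also have "\<dots> = (\<Sum>k\<in>S. (b k)\<^sup>2) - 2 * (?s/?N) * ?s + ?N * (?s/?N)\<^sup>2"
    by (simp add: sum.distrib sum_subtractf sum_distrib_left)
  also have "\<dots> = (\<Sum>k\<in>S. (b k)\<^sup>2) - ?s\<^sup>2 / ?N"
    using N by (simp add: field_simps power2_eq_square)
  finally show ?thesis by simp
qed

text \<open>In the direction \<open>JX\<close> the diagonal entries \<open>c k k 0\<close> are not tied to \<open>c 0 0 0\<close>, so the square
  completion needs their variance as well.\<close>

lemma defect_JX_as_squares:
  assumes "2 \<le> n"
  shows "4 * real n * (real n - 1) * defect_JX n c
    = ((real n - 1) * c 0 0 0 - (real n + 1) * (\<Sum>i\<in>{1..<n}. c i i 0))\<^sup>2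
      + 4 * real n * (real n - 1) * (\<Sum>k\<in>{1..<n}. (c k k 0 - (\<Sum>i\<in>{1..<n}. c i i 0) / (real n - 1))\<^sup>2)"
proof -
  define s where "s = (\<Sum>i\<in>{1..<n}. c i i 0)"
  define V where "V = (\<Sum>k\<in>{1..<n}. (c k k 0 - s / (real n - 1))\<^sup>2)"
  have "real (card {1..<n}) = real n - 1" using assms by (simp add: of_nat_diff)
  then have Q: "(\<Sum>k\<in>{1..<n}. (c k k 0)\<^sup>2) = s\<^sup>2 / (real n - 1) + V"
    using sum_squares_mean_variance[of "{1..<n}" "\<lambda>k. c k k 0"] assms by (simp add: s_def V_def)
  show ?thesis
    unfolding defect_JX_def s_def[symmetric] V_def[symmetric] Q using assms
    by (simp add: field_simps power2_eq_square)
qed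

lemma defect_JX_nonneg:
  assumes "2 \<le> n"
  shows "defect_JX n c \<ge> 0"
proof -
  have "4 * real n * (real n - 1) * defect_JX n c \<ge> 0"
    unfolding defect_JX_as_squares[OF assms] using assms by (simp add: sum_nonneg)
  moreover have "4 * real n * (real n - 1) > 0" using assms by simp
  ultimately show ?thesis by (metis zero_le_mult_iff linorder_not_le)
qed

lemma defect_JX_eq_0D:
  assumes n2: "2 \<le> n" and "defect_JX n c = 0"
  shows "c 0 0 0 = (real n + 1) * c 1 1 0"
proof -
  define s where "s = (\<Sum>i\<in>{1..<n}. c i i 0)"
  define V where "V = (\<Sum>k\<in>{1..<n}. (c k k 0 - s / (real n - 1))\<^sup>2)"
  have p: "4 * real n * (real n - 1) > 0" using n2 by simp
  have "V \<ge> 0" unfolding V_def by (simp add: sum_nonneg)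
  then have "4 * real n * (real n - 1) * V \<ge> 0" using p by simp
  moreover have "((real n - 1) * c 0 0 0 - (real n + 1) * s)\<^sup>2 + 4 * real n * (real n - 1) * V = 0"
    using defect_JX_as_squares[OF n2, of c] assms(2) unfolding s_def V_def by simp
  ultimately have "((real n - 1) * c 0 0 0 - (real n + 1) * s)\<^sup>2 = 0" "4 * real n * (real n - 1) * V = 0"
    by (simp_all add: add_nonneg_eq_0_iff)
  then have a: "(real n - 1) * c 0 0 0 = (real n + 1) * s" and "V = 0" using p by auto
  then have "(c 1 1 0 - s / (real n - 1))\<^sup>2 = 0"
    using sum_nonneg_eq_0_iff[of "{1..<n}" "\<lambda>k. (c k k 0 - s / (real n - 1))\<^sup>2"] n2
    unfolding V_def by simp
  then have "s = (real n - 1) * c 1 1 0" using n2 by (simp add: field_simps)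
  then have "(real n - 1) * c 0 0 0 = (real n - 1) * ((real n + 1) * c 1 1 0)" using a by simp
  then show ?thesis using n2 by simp
qed

lemma ric_defect_nonneg:
  assumes "2 \<le> n"
    and "\<And>i j k. i < n \<Longrightarrow> j < n \<Longrightarrow> k < n \<Longrightarrow> c i j k = c j i k"
    and "\<And>i j k. i < n \<Longrightarrow> j < n \<Longrightarrow> k < n \<Longrightarrow> c i j k = c i k j"
  shows "ric_defect n c \<ge> 0"
proof -
  have "(\<Sum>k\<in>{1..<n}. defect_Je n c k) \<ge> 0" using defect_Je_nonneg[OF assms(1)] by (simp add: sum_nonneg)
  moreover have "(\<Sum>k\<in>{1..<n}. defect_mixed n c k) \<ge> 0" by (auto simp: defect_mixed_def intro!: sum_nonneg)
  ultimately show ?thesis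
    using ric_defect_decomposition[of n c, OF assms] defect_JX_nonneg[OF assms(1), of c] by linarith
qed

lemma ric_defect_eq_0D:
  assumes "2 \<le> n"
    and "\<And>i j k. i < n \<Longrightarrow> j < n \<Longrightarrow> k < n \<Longrightarrow> c i j k = c j i k"
    and "\<And>i j k. i < n \<Longrightarrow> j < n \<Longrightarrow> k < n \<Longrightarrow> c i j k = c i k j"
    and "ric_defect n c = 0"
  shows "defect_JX n c = 0" and "\<And>k. k \<in> {1..<n} \<Longrightarrow> defect_Je n c k = 0"
proof -
  have JX: "defect_JX n c \<ge> 0" and Je: "\<And>k. defect_Je n c k \<ge> 0"
    using defect_JX_nonneg defect_Je_nonneg assms(1) by blast+
  have "(\<Sum>k\<in>{1..<n}. defect_mixed n c k) \<ge> 0"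
    by (auto simp: defect_mixed_def intro!: sum_nonneg)
  moreover have "(\<Sum>k\<in>{1..<n}. defect_Je n c k) \<ge> 0" using Je by (simp add: sum_nonneg)
  ultimately have "defect_JX n c = 0" "(\<Sum>k\<in>{1..<n}. defect_Je n c k) = 0"
    using ric_defect_decomposition[of n c, OF assms(1-3)] assms(4) JX by linarith+
  then show "defect_JX n c = 0" "\<And>k. k \<in> {1..<n} \<Longrightarrow> defect_Je n c k = 0"
    using sum_nonneg_eq_0_iff[of "{1..<n}" "defect_Je n c"] Je by auto
qed

lemma ric_defect_2:
  "ric_defect 2 c = (1/8) * (c 0 0 0 + c 1 1 0)\<^sup>2 + (1/8) * (c 0 0 1 + c 1 1 1)\<^sup>2
     - (c 0 0 0 * c 1 1 0 + c 0 0 1 * c 1 1 1) + (c 0 1 0)\<^sup>2 + (c 0 1 1)\<^sup>2"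
  by (simp add: ric_defect_def numeral_2_eq_2 algebra_simps)

lemma ric_defect_cong:
  assumes "\<And>i j k. i < n \<Longrightarrow> j < n \<Longrightarrow> k < n \<Longrightarrow> c i j k = c' i j k"
  shows "ric_defect n c = ric_defect n c'"
proof -
  have "(\<Sum>k<n. (\<Sum>i<n. c i i k)\<^sup>2) = (\<Sum>k<n. (\<Sum>i<n. c' i i k)\<^sup>2)"
    and "(\<Sum>i\<in>{1..<n}. \<Sum>k<n. c 0 0 k * c i i k) = (\<Sum>i\<in>{1..<n}. \<Sum>k<n. c' 0 0 k * c' i i k)"
    and "(\<Sum>i\<in>{1..<n}. \<Sum>k<n. (c 0 i k)\<^sup>2) = (\<Sum>i\<in>{1..<n}. \<Sum>k<n. (c' 0 i k)\<^sup>2)"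
    by (auto intro!: sum.cong simp: assms)
  then show ?thesis unfolding ric_defect_def by simp
qed

section \<open>Lagrangian subspaces and their second fundamental form\<close>

lemma Rbar_orthonormal_pair:
  fixes J :: "'a::real_inner \<Rightarrow> 'a"
  assumes "inner X X = 1" "inner Y Y = 1" "inner X Y = 0"
    "inner (J X) Y = 0" "inner (J Y) X = 0" "inner (J X) X = 0" "inner (J Y) Y = 0"
  shows "Rbar a b c J xi X Y Y X = a / 4
     + b / 8 * ((eta xi X)\<^sup>2 + (eta_t J xi X)\<^sup>2 + (eta xi Y)\<^sup>2 + (eta_t J xi Y)\<^sup>2)
     + c * (eta xi X * eta_t J xi Y - eta_t J xi X * eta xi Y)\<^sup>2"
proof -
  have "inner Y X = 0" using assms(3) by (simp add: inner_commute)
  then show ?thesis using assms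
    unfolding Rbar_def pi_t_def Phi_t_def Psi_t_def Let_def
    by (simp add: power2_eq_square algebra_simps)
qed

definition ric_bound ::
    "nat \<Rightarrow> real \<Rightarrow> real \<Rightarrow> real \<Rightarrow> ('a::real_inner \<Rightarrow> 'a) \<Rightarrow> 'a \<Rightarrow> 'a set \<Rightarrow> ('a \<Rightarrow> 'a \<Rightarrow> 'a) \<Rightarrow> 'a \<Rightarrow> real" where
  "ric_bound n a b c J xi L h X = real (n - 1) / 4 * a
     + (1/8) * (real (n - 2) * ((eta xi X)\<^sup>2 + (eta_t J xi X)\<^sup>2) + 1) * b
     + (norm (eta xi X *\<^sub>R tproj L (J xi) - eta_t J xi X *\<^sub>R tproj L xi))\<^sup>2 * c
     + real ((n - 1) * n) / 4 * (norm (mean_curv L n h))\<^sup>2"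

definition totally_geodesic :: "'a set \<Rightarrow> ('a \<Rightarrow> 'a \<Rightarrow> 'b::zero) \<Rightarrow> bool" where
  "totally_geodesic L h \<longleftrightarrow> (\<forall>X\<in>L. \<forall>Y\<in>L. h X Y = 0)"

definition H_umbilical_3mu :: "('a::real_inner \<Rightarrow> 'a) \<Rightarrow> 'a set \<Rightarrow> ('a \<Rightarrow> 'a \<Rightarrow> 'a) \<Rightarrow> bool" where
  "H_umbilical_3mu J L h \<longleftrightarrow> (\<exists>e1 e2 \<mu>. e1 \<in> L \<and> e2 \<in> L \<and> norm e1 = 1 \<and> norm e2 = 1
     \<and> inner e1 e2 = 0 \<and> h e1 e1 = (3 * \<mu>) *\<^sub>R J e1 \<and> h e2 e2 = \<mu> *\<^sub>R J e1 \<and> h e1 e2 = \<mu> *\<^sub>R J e2)"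

locale lagrangian_subspace =
  fixes J :: "'a::euclidean_space \<Rightarrow> 'a" and L :: "'a set" and n :: nat and h :: "'a \<Rightarrow> 'a \<Rightarrow> 'a"
  assumes J_lin: "linear J"
    and J_sq: "\<And>x. J (J x) = - x"
    and J_isom: "\<And>x y. inner (J x) (J y) = inner x y"
    and L_sub: "subspace L"
    and L_dim: "dim L = n"
    and Lagr: "J ` L = {v. \<forall>x\<in>L. inner v x = 0}"
    and h_bil: "bilinear h"
    and h_sym: "\<And>X Y. X \<in> L \<Longrightarrow> Y \<in> L \<Longrightarrow> h X Y = h Y X"
    and h_normal: "\<And>X Y Z. X \<in> L \<Longrightarrow> Y \<in> L \<Longrightarrow> Z \<in> L \<Longrightarrow> inner (h X Y) Z = 0"
    and h_cubic: "\<And>X Y Z. X \<in> L \<Longrightarrow> Y \<in> L \<Longrightarrow> Z \<in> L \<Longrightarrow>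
                    inner (h X Y) (J Z) = inner (h X Z) (J Y)"
begin

lemma inner_J_tangent: "x \<in> L \<Longrightarrow> y \<in> L \<Longrightarrow> inner y (J x) = 0"
  using Lagr by (force simp: inner_commute)

lemma inner_J_left: "inner (J x) y = - inner x (J y)"
proof -
  have "inner (J x) y = inner (J (J x)) (J y)" by (simp add: J_isom)
  then show ?thesis by (simp add: J_sq)
qed

lemma normal_onb_expansion:
  assumes "onb L n e" "\<And>x. x \<in> L \<Longrightarrow> inner w x = 0"
  shows "w = (\<Sum>i<n. inner w (J (e i)) *\<^sub>R J (e i))"
proof -
  obtain z where z: "z \<in> L" "w = J z" using Lagr assms(2) by blast
  have "J z = J (\<Sum>i<n. inner z (e i) *\<^sub>R e i)"
    using onb_expansion[OF L_sub L_dim assms(1) z(1)] by simp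
  also have "\<dots> = (\<Sum>i<n. inner w (J (e i)) *\<^sub>R J (e i))"
    using z by (simp add: linear_sum[OF J_lin] linear_scale[OF J_lin] J_isom)
  finally show ?thesis using z by simp
qed

lemma tangent_normal_expansion:
  assumes "onb L n e"
  shows "v = (\<Sum>i<n. inner v (e i) *\<^sub>R e i) + (\<Sum>i<n. inner v (J (e i)) *\<^sub>R J (e i))"
proof -
  define w where "w = v - (\<Sum>i<n. inner v (e i) *\<^sub>R e i)"
  have "inner w (e j) = 0" if "j < n" for j
    using onb_inner_sum_scaleR[OF assms that] by (simp add: w_def inner_diff_left)
  then have "inner w x = 0" if "x \<in> L" for x
    using inner_eq_0_if_orthogonal_onb[OF L_sub L_dim assms _ that] by blast
  then have "w = (\<Sum>i<n. inner w (J (e i)) *\<^sub>R J (e i))"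
    by (rule normal_onb_expansion[OF assms])
  also have "\<dots> = (\<Sum>i<n. inner v (J (e i)) *\<^sub>R J (e i))"
    using assms by (intro sum.cong refl)
      (simp add: w_def inner_diff_left inner_sum_left inner_J_tangent onb_in)
  finally show ?thesis by (simp add: w_def algebra_simps)
qed

lemma inner_tangent_normal_expansion:
  assumes "onb L n e"
  shows "inner u v = (\<Sum>i<n. inner u (e i) * inner v (e i)) + (\<Sum>i<n. inner u (J (e i)) * inner v (J (e i)))"
proof -
  have "inner u v = inner u ((\<Sum>i<n. inner v (e i) *\<^sub>R e i) + (\<Sum>i<n. inner v (J (e i)) *\<^sub>R J (e i)))"
    using tangent_normal_expansion[OF assms, of v] by simp
  then show ?thesis by (simp add: inner_add_right inner_sum_right mult.commute)
qed

lemma inner_normal_expansion: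
  assumes "onb L n e" "\<And>i. i < n \<Longrightarrow> inner u (e i) = 0"
  shows "inner u v = (\<Sum>i<n. inner u (J (e i)) * inner v (J (e i)))"
  using inner_tangent_normal_expansion[OF assms(1), of u v] assms(2) by simp

lemma eta_parseval:
  assumes "onb L n e"
  shows "(\<Sum>i<n. (eta xi (e i))\<^sup>2 + (eta_t J xi (e i))\<^sup>2) = (norm xi)\<^sup>2"
proof -
  have "inner xi xi = (\<Sum>i<n. (inner xi (e i))\<^sup>2) + (\<Sum>i<n. (inner xi (J (e i)))\<^sup>2)"
    using inner_tangent_normal_expansion[OF assms, of xi xi] by (simp add: power2_eq_square)
  then show ?thesis unfolding power2_norm_eq_inner by (simp add: sum.distrib eta_def eta_t_def inner_J_left)
qed

lemma tproj_onb:
  assumes "onb L n e"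
  shows "tproj L v = (\<Sum>i<n. inner v (e i) *\<^sub>R e i)"
  unfolding tproj_def
proof (rule the_equality)
  let ?w = "\<Sum>i<n. inner v (e i) *\<^sub>R e i"
  have wL: "?w \<in> L"
    by (intro subspace_sum[OF L_sub] subspace_scale[OF L_sub]) (use assms in \<open>auto simp: onb_in\<close>)
  have "inner (v - ?w) (e j) = 0" if "j < n" for j
    using onb_inner_sum_scaleR[OF assms that] by (simp add: inner_diff_left)
  then have orth: "\<forall>x\<in>L. inner (v - ?w) x = 0"
    using inner_eq_0_if_orthogonal_onb[OF L_sub L_dim assms] by blast
  then show "?w \<in> L \<and> (\<forall>x\<in>L. inner (v - ?w) x = 0)" using wL by blast
  fix w' assume w': "w' \<in> L \<and> (\<forall>x\<in>L. inner (v - w') x = 0)"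
  have "?w - w' \<in> L" using wL w' L_sub by (simp add: subspace_diff)
  then have "inner (v - w') (?w - w') = 0" "inner (v - ?w) (?w - w') = 0"
    using w' orth by auto
  then have "inner (?w - w') (?w - w') = 0" by (simp add: inner_diff_left inner_diff_right)
  then show "w' = ?w" by simp
qed

lemma norm_tproj_combination:
  assumes "onb L n e"
  shows "(norm (eta xi X *\<^sub>R tproj L (J xi) - eta_t J xi X *\<^sub>R tproj L xi))\<^sup>2
       = (\<Sum>i<n. (eta xi X * eta_t J xi (e i) - eta_t J xi X * eta xi (e i))\<^sup>2)"
proof -
  have "eta xi X *\<^sub>R tproj L (J xi) - eta_t J xi X *\<^sub>R tproj L xi
      = (\<Sum>i<n. (eta xi X * eta_t J xi (e i) - eta_t J xi X * eta xi (e i)) *\<^sub>R e i)"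
    by (simp add: tproj_onb[OF assms] scaleR_sum_right sum_subtractf[symmetric] algebra_simps
        eta_def eta_t_def inner_commute)
  then show ?thesis using norm_sum_scaleR_onb[OF assms] by simp
qed

lemma h_scaleR: "h (a *\<^sub>R x) (b *\<^sub>R y) = (a * b) *\<^sub>R h x y"
  using h_bil by (simp add: bilinear_lmul bilinear_rmul)

lemma h_normal_onb: "x \<in> L \<Longrightarrow> y \<in> L \<Longrightarrow> onb L n e \<Longrightarrow> i < n \<Longrightarrow> inner (h x y) (e i) = 0"
  using h_normal onb_in by blast

lemma h_onb_expansion:
  assumes "onb L n e" "x \<in> L" "y \<in> L"
  shows "h x y = (\<Sum>k<n. inner (h x y) (J (e k)) *\<^sub>R J (e k))"
  using assms by (intro normal_onb_expansion) (auto simp: h_normal)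

lemma trace_h_onb_independent:
  assumes e: "onb L n e" and e': "onb L n e'"
  shows "(\<Sum>i<n. h (e' i) (e' i)) = (\<Sum>i<n. h (e i) (e i))"
proof -
  let ?M = "\<lambda>i j. inner (e' i) (e j)"
  have "(\<Sum>i<n. h (e' i) (e' i)) = (\<Sum>i<n. \<Sum>j<n. \<Sum>l<n. (?M i j * ?M i l) *\<^sub>R h (e j) (e l))"
  proof (rule sum.cong)
    fix i assume "i \<in> {..<n}"
    then have "h (e' i) (e' i) = h (\<Sum>j<n. ?M i j *\<^sub>R e j) (\<Sum>l<n. ?M i l *\<^sub>R e l)"
      using onb_expansion[OF L_sub L_dim e] e' onb_in by (metis lessThan_iff)
    then show "h (e' i) (e' i) = (\<Sum>j<n. \<Sum>l<n. (?M i j * ?M i l) *\<^sub>R h (e j) (e l))"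
      by (simp add: bilinear_sum[OF h_bil] sum.cartesian_product h_scaleR)
  qed simp
  also have "\<dots> = (\<Sum>j<n. \<Sum>l<n. (\<Sum>i<n. ?M i j * ?M i l) *\<^sub>R h (e j) (e l))"
    by (subst sum.swap, rule sum.cong[OF refl], subst sum.swap) (simp add: scaleR_sum_left)
  also have "\<dots> = (\<Sum>j<n. \<Sum>l<n. inner (e j) (e l) *\<^sub>R h (e j) (e l))"
  proof (intro sum.cong refl)
    fix j l assume "j \<in> {..<n}" "l \<in> {..<n}"
    then have "inner (e j) (e l) = (\<Sum>i<n. inner (e j) (e' i) * inner (e' i) (e l))"
      using onb_parseval[OF L_sub L_dim e'] e onb_in by blast
    then show "(\<Sum>i<n. ?M i j * ?M i l) *\<^sub>R h (e j) (e l) = inner (e j) (e l) *\<^sub>R h (e j) (e l)"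
      by (simp add: inner_commute)
  qed
  also have "\<dots> = (\<Sum>j<n. h (e j) (e j))"
  proof (rule sum.cong)
    fix j assume j: "j \<in> {..<n}"
    have "(\<Sum>l<n. inner (e j) (e l) *\<^sub>R h (e j) (e l)) = (\<Sum>l<n. if l = j then h (e j) (e l) else 0)"
      by (rule sum.cong) (use j e in \<open>auto simp: onb_inner\<close>)
    then show "(\<Sum>l<n. inner (e j) (e l) *\<^sub>R h (e j) (e l)) = h (e j) (e j)" using j by simp
  qed simp
  finally show ?thesis .
qed

definition cubic_coeff :: "(nat \<Rightarrow> 'a) \<Rightarrow> nat \<Rightarrow> nat \<Rightarrow> nat \<Rightarrow> real" where
  "cubic_coeff e i j k = inner (h (e i) (e j)) (J (e k))"

lemma cubic_coeff_sym12: "onb L n e \<Longrightarrow> i < n \<Longrightarrow> j < n \<Longrightarrow> cubic_coeff e i j k = cubic_coeff e j i k"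
  by (simp add: cubic_coeff_def h_sym onb_in)

lemma cubic_coeff_sym23: "onb L n e \<Longrightarrow> i < n \<Longrightarrow> j < n \<Longrightarrow> k < n \<Longrightarrow> cubic_coeff e i j k = cubic_coeff e i k j"
  by (simp add: cubic_coeff_def h_cubic onb_in)

lemma ric_defect_cubic_coeff_nonneg: "onb L n e \<Longrightarrow> 2 \<le> n \<Longrightarrow> ric_defect n (cubic_coeff e) \<ge> 0"
  using ric_defect_nonneg[of n "cubic_coeff e"] cubic_coeff_sym12 cubic_coeff_sym23 by blast

lemma inner_h_h_onb:
  assumes "onb L n e" "x \<in> L" "y \<in> L" "z \<in> L" "w \<in> L"
  shows "inner (h x y) (h z w) = (\<Sum>k<n. inner (h x y) (J (e k)) * inner (h z w) (J (e k)))"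
  by (rule inner_normal_expansion[OF assms(1)]) (use assms in \<open>simp add: h_normal_onb\<close>)

lemma norm_mean_curv_squared:
  assumes "onb L n e" "0 < n"
  shows "(norm (mean_curv L n h))\<^sup>2 = (\<Sum>k<n. (\<Sum>i<n. cubic_coeff e i i k)\<^sup>2) / (real n)\<^sup>2"
proof -
  define T where "T = (\<Sum>i<n. h (e i) (e i))"
  have "onb L n (SOME e. onb L n e)" using assms(1) by (rule someI[of "onb L n"])
  then have "mean_curv L n h = (1 / real n) *\<^sub>R T"
    unfolding mean_curv_def Let_def T_def using trace_h_onb_independent[OF assms(1)] by simp
  moreover have "inner T (e j) = 0" if "j < n" for j
    unfolding T_def inner_sum_left using assms(1) that by (intro sum.neutral) (auto simp: h_normal_onb onb_in)
  then have "inner T T = (\<Sum>k<n. (\<Sum>i<n. cubic_coeff e i i k)\<^sup>2)"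
    by (subst inner_normal_expansion[OF assms(1)]) (simp_all add: T_def inner_sum_left cubic_coeff_def power2_eq_square)
  ultimately show ?thesis by (simp add: power2_norm_eq_inner field_simps)
qed

lemma sectional_gauss_onb:
  fixes R :: "'a \<Rightarrow> 'a \<Rightarrow> 'a \<Rightarrow> 'a \<Rightarrow> real"
  assumes e: "onb L n e" and i: "i \<in> {1..<n}"
    and Gauss: "\<And>X Y Z W. X \<in> L \<Longrightarrow> Y \<in> L \<Longrightarrow> Z \<in> L \<Longrightarrow> W \<in> L \<Longrightarrow>
                  R X Y Z W = Rbar a b c J xi X Y Z W + inner (h X W) (h Y Z) - inner (h X Z) (h Y W)"
  shows "R (e 0) (e i) (e i) (e 0) = a / 4
      + b / 8 * ((eta xi (e 0))\<^sup>2 + (eta_t J xi (e 0))\<^sup>2 + (eta xi (e i))\<^sup>2 + (eta_t J xi (e i))\<^sup>2)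
      + c * (eta xi (e 0) * eta_t J xi (e i) - eta_t J xi (e 0) * eta xi (e i))\<^sup>2
      + (\<Sum>k<n. cubic_coeff e 0 0 k * cubic_coeff e i i k) - (\<Sum>k<n. (cubic_coeff e 0 i k)\<^sup>2)"
proof -
  have L0: "e 0 \<in> L" and Li: "e i \<in> L" using e i by (auto intro: onb_in)
  have "inner (h (e 0) (e 0)) (h (e i) (e i)) = (\<Sum>k<n. cubic_coeff e 0 0 k * cubic_coeff e i i k)"
    unfolding cubic_coeff_def by (rule inner_h_h_onb[OF e L0 L0 Li Li])
  moreover have "inner (h (e 0) (e i)) (h (e i) (e 0)) = (\<Sum>k<n. (cubic_coeff e 0 i k)\<^sup>2)"
    unfolding cubic_coeff_def using inner_h_h_onb[OF e L0 Li Li L0] h_sym[OF L0 Li]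
    by (simp add: power2_eq_square)
  moreover have "Rbar a b c J xi (e 0) (e i) (e i) (e 0) = a / 4
      + b / 8 * ((eta xi (e 0))\<^sup>2 + (eta_t J xi (e 0))\<^sup>2 + (eta xi (e i))\<^sup>2 + (eta_t J xi (e i))\<^sup>2)
      + c * (eta xi (e 0) * eta_t J xi (e i) - eta_t J xi (e 0) * eta xi (e i))\<^sup>2"
    by (rule Rbar_orthonormal_pair) (use e i Li L0 in \<open>auto simp: onb_inner inner_J_tangent inner_commute\<close>)
  ultimately show ?thesis using Gauss[OF L0 Li Li L0] by (simp add: add.assoc)
qed

lemma ric_onb_eq_bound_minus_defect:
  fixes R :: "'a \<Rightarrow> 'a \<Rightarrow> 'a \<Rightarrow> 'a \<Rightarrow> real"
  assumes e: "onb L n e" and n2: "2 \<le> n" and xi1: "norm xi = 1"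
    and Gauss: "\<And>X Y Z W. X \<in> L \<Longrightarrow> Y \<in> L \<Longrightarrow> Z \<in> L \<Longrightarrow> W \<in> L \<Longrightarrow>
                  R X Y Z W = Rbar a b c J xi X Y Z W + inner (h X W) (h Y Z) - inner (h X Z) (h Y W)"
  shows "(\<Sum>i\<in>{1..<n}. R (e 0) (e i) (e i) (e 0))
    = ric_bound n a b c J xi L h (e 0) - ric_defect n (cubic_coeff e)"
proof -
  have n0: "0 < n" using n2 by simp
  let ?E = "\<lambda>i. (eta xi (e i))\<^sup>2 + (eta_t J xi (e i))\<^sup>2"
  let ?P = "\<lambda>i. eta xi (e 0) * eta_t J xi (e i) - eta_t J xi (e 0) * eta xi (e i)"
  let ?H = "(norm (mean_curv L n h))\<^sup>2"
  have "(\<Sum>i\<in>{1..<n}. R (e 0) (e i) (e i) (e 0)) =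
     (\<Sum>i\<in>{1..<n}. a / 4 + b / 8 * (?E 0 + ?E i) + c * (?P i)\<^sup>2
      + (\<Sum>k<n. cubic_coeff e 0 0 k * cubic_coeff e i i k) - (\<Sum>k<n. (cubic_coeff e 0 i k)\<^sup>2))"
    using sectional_gauss_onb[OF e _ Gauss] by (intro sum.cong refl) (simp add: add.assoc)
  also have "\<dots> = real (n - 1) * (a / 4) + b / 8 * (real (n - 1) * ?E 0 + (\<Sum>i\<in>{1..<n}. ?E i))
      + c * (\<Sum>i\<in>{1..<n}. (?P i)\<^sup>2)
      + (\<Sum>i\<in>{1..<n}. \<Sum>k<n. cubic_coeff e 0 0 k * cubic_coeff e i i k)
      - (\<Sum>i\<in>{1..<n}. \<Sum>k<n. (cubic_coeff e 0 i k)\<^sup>2)"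
    by (simp add: sum.distrib sum_subtractf sum_distrib_left algebra_simps)
  also have "(\<Sum>i\<in>{1..<n}. ?E i) = 1 - ?E 0"
    using eta_parseval[OF e, of xi] sum_lessThan_split_first[OF n0, of ?E] xi1 by simp
  also have "(\<Sum>i\<in>{1..<n}. (?P i)\<^sup>2) = (norm (eta xi (e 0) *\<^sub>R tproj L (J xi) - eta_t J xi (e 0) *\<^sub>R tproj L xi))\<^sup>2"
    using norm_tproj_combination[OF e, of xi "e 0"] sum_lessThan_split_first[OF n0, of "\<lambda>i. (?P i)\<^sup>2"]
    by (simp add: mult.commute)
  also have "(\<Sum>i\<in>{1..<n}. \<Sum>k<n. (cubic_coeff e 0 i k)\<^sup>2)
      = ric_defect n (cubic_coeff e) + (\<Sum>i\<in>{1..<n}. \<Sum>k<n. cubic_coeff e 0 0 k * cubic_coeff e i i k)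
        - (real n - 1) / (4 * real n) * ((real n)\<^sup>2 * ?H)"
    using norm_mean_curv_squared[OF e n0] n0 by (simp add: ric_defect_def)
  also have "(real n - 1) / (4 * real n) * ((real n)\<^sup>2 * ?H) = real ((n - 1) * n) / 4 * ?H"
    using n2 by (simp add: of_nat_diff power2_eq_square)
  finally show ?thesis
    using n2 by (simp add: ric_bound_def of_nat_diff algebra_simps)
qed

lemma Ric_eq_bound_minus_defect:
  fixes R :: "'a \<Rightarrow> 'a \<Rightarrow> 'a \<Rightarrow> 'a \<Rightarrow> real"
  assumes "2 \<le> n" "norm xi = 1" "X \<in> L" "norm X = 1"
    and "\<And>X Y Z W. X \<in> L \<Longrightarrow> Y \<in> L \<Longrightarrow> Z \<in> L \<Longrightarrow> W \<in> L \<Longrightarrow>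
           R X Y Z W = Rbar a b c J xi X Y Z W + inner (h X W) (h Y Z) - inner (h X Z) (h Y W)"
  obtains e where "onb L n e" "e 0 = X"
    "Ric L n R X = ric_bound n a b c J xi L h X - ric_defect n (cubic_coeff e)"
proof -
  define e where "e = (SOME e. onb L n e \<and> e 0 = X)"
  have e: "onb L n e" "e 0 = X"
    using someI_ex[OF onb_exists_first[OF L_sub L_dim assms(3,4)]] by (simp_all add: e_def)
  have "Ric L n R X = (\<Sum>i\<in>{1..<n}. R (e 0) (e i) (e i) (e 0))"
    by (simp add: Ric_def e_def Let_def)
  then show ?thesis
    using that[OF e] ric_onb_eq_bound_minus_defect[OF e(1) assms(1,2,5)] e(2) by simp
qed

lemma h_combination:
  assumes "x \<in> L" "y \<in> L"
  shows "h (p *\<^sub>R x + q *\<^sub>R y) (r *\<^sub>R x + s *\<^sub>R y)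
       = (p * r) *\<^sub>R h x x + (p * s + q * r) *\<^sub>R h x y + (q * s) *\<^sub>R h y y"
proof -
  have "h (p *\<^sub>R x + q *\<^sub>R y) (r *\<^sub>R x + s *\<^sub>R y)
      = (p * r) *\<^sub>R h x x + (p * s) *\<^sub>R h x y + (q * r) *\<^sub>R h y x + (q * s) *\<^sub>R h y y"
    using h_bil by (simp add: bilinear_ladd bilinear_radd h_scaleR)
  then show ?thesis using h_sym[OF assms(2,1)] by (simp add: algebra_simps)
qed

lemma totally_geodesic_if_unit_diagonal_zero:
  assumes "\<And>X. X \<in> L \<Longrightarrow> norm X = 1 \<Longrightarrow> h X X = 0"
  shows "totally_geodesic L h"
proof -
  have diag: "h X X = 0" if X: "X \<in> L" for X
  proof (cases "X = 0")
    case True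
    then show ?thesis using h_bil by (simp add: bilinear_lzero)
  next
    case False
    let ?u = "(1 / norm X) *\<^sub>R X"
    have "?u \<in> L" "norm ?u = 1" using X False L_sub by (auto simp: subspace_scale)
    moreover have "h X X = (norm X * norm X) *\<^sub>R h ?u ?u"
      using h_scaleR[of "norm X" ?u "norm X" ?u] False by simp
    ultimately show ?thesis using assms by simp
  qed
  show ?thesis
    unfolding totally_geodesic_def
  proof (intro ballI)
    fix X Y assume X: "X \<in> L" and Y: "Y \<in> L"
    have "h (1 *\<^sub>R X + 1 *\<^sub>R Y) (1 *\<^sub>R X + 1 *\<^sub>R Y) = 0"
      using X Y L_sub diag by (simp add: subspace_add)
    then have "(2::real) *\<^sub>R h X Y = 0" using h_combination[OF X Y, of 1 1 1 1] X Y diag by simp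
    then show "h X Y = 0" by simp
  qed
qed

lemma h_diagonal_if_cubic_coeff_zero:
  assumes e: "onb L n e" and n0: "0 < n" and zero: "\<And>k. k \<in> {1..<n} \<Longrightarrow> cubic_coeff e 0 0 k = 0"
  shows "h (e 0) (e 0) = cubic_coeff e 0 0 0 *\<^sub>R J (e 0)"
proof -
  have L0: "e 0 \<in> L" using e n0 onb_in by blast
  have "h (e 0) (e 0) = (\<Sum>k<n. cubic_coeff e 0 0 k *\<^sub>R J (e k))"
    unfolding cubic_coeff_def by (rule h_onb_expansion[OF e L0 L0])
  also have "\<dots> = cubic_coeff e 0 0 0 *\<^sub>R J (e 0)"
    using zero by (simp add: sum_lessThan_split_first[OF n0])
  finally show ?thesis .
qed

text \<open>For \<open>n \<ge> 3\<close> a vanishing defect says \<open>h(X,X) = (n+1) \<langle>h(e\<^sub>1,e\<^sub>1), JX\<rangle> JX\<close>; applied to the unit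
  vector \<open>e\<^sub>1 \<perp> X\<close> this makes \<open>h(e\<^sub>1,e\<^sub>1)\<close> parallel to \<open>Je\<^sub>1\<close>, hence orthogonal to \<open>JX\<close>.\<close>

lemma totally_geodesic_if_defects_zero:
  assumes n3: "3 \<le> n"
    and zero: "\<And>X. X \<in> L \<Longrightarrow> norm X = 1 \<Longrightarrow> \<exists>e. onb L n e \<and> e 0 = X \<and> ric_defect n (cubic_coeff e) = 0"
  shows "totally_geodesic L h"
proof -
  have n2: "2 \<le> n" using n3 by simp
  have parallel: "\<exists>e. onb L n e \<and> e 0 = X \<and> h X X = cubic_coeff e 0 0 0 *\<^sub>R J X
                  \<and> cubic_coeff e 0 0 0 = (real n + 1) * cubic_coeff e 1 1 0"
    if X: "X \<in> L" "norm X = 1" for X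
  proof -
    obtain e where e: "onb L n e" "e 0 = X" "ric_defect n (cubic_coeff e) = 0" using zero[OF X] by blast
    have sym: "\<And>i j k. i < n \<Longrightarrow> j < n \<Longrightarrow> k < n \<Longrightarrow> cubic_coeff e i j k = cubic_coeff e j i k"
      "\<And>i j k. i < n \<Longrightarrow> j < n \<Longrightarrow> k < n \<Longrightarrow> cubic_coeff e i j k = cubic_coeff e i k j"
      using cubic_coeff_sym12[OF e(1)] cubic_coeff_sym23[OF e(1)] by auto
    note D = ric_defect_eq_0D[OF n2 sym e(3)]
    have "h X X = cubic_coeff e 0 0 0 *\<^sub>R J X"
      using h_diagonal_if_cubic_coeff_zero[OF e(1)] defect_Je_eq_0D(1)[OF n2 D(2)] n3 e(2) by simp
    then show ?thesis using defect_JX_eq_0D[OF n2 D(1)] e by blast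
  qed
  have "h X X = 0" if X: "X \<in> L" "norm X = 1" for X
  proof -
    obtain e where e: "onb L n e" "e 0 = X" "h X X = cubic_coeff e 0 0 0 *\<^sub>R J X"
        "cubic_coeff e 0 0 0 = (real n + 1) * cubic_coeff e 1 1 0"
      using parallel[OF X] by blast
    have Y: "e 1 \<in> L" "norm (e 1) = 1" using e(1) n3 by (auto simp: onb_in onb_inner norm_eq_1)
    have XY: "inner (e 1) X = 0" using onb_inner[OF e(1), of 1 0] e(2) n3 by simp
    obtain e' where "h (e 1) (e 1) = cubic_coeff e' 0 0 0 *\<^sub>R J (e 1)"
      using parallel[OF Y] by blast
    then have "cubic_coeff e 1 1 0 = 0"
      using XY e(2) by (simp add: cubic_coeff_def J_isom)
    then show ?thesis using e(3,4) by simp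
  qed
  then show ?thesis by (rule totally_geodesic_if_unit_diagonal_zero)
qed

lemma ric_defect_zero_if_totally_geodesic:
  assumes "onb L n e" "totally_geodesic L h"
  shows "ric_defect n (cubic_coeff e) = 0"
proof -
  have "ric_defect n (cubic_coeff e) = ric_defect n (\<lambda>_ _ _. 0)"
    by (rule ric_defect_cong) (use assms in \<open>simp add: cubic_coeff_def onb_in totally_geodesic_def\<close>)
  then show ?thesis by (simp add: ric_defect_def)
qed

lemma cubic_shape_if_defect_zero_2:
  assumes n: "n = 2" and e: "onb L n e" and D: "ric_defect n (cubic_coeff e) = 0"
  obtains \<gamma> \<beta> where "h (e 0) (e 0) = (3 * \<gamma>) *\<^sub>R J (e 0) + \<beta> *\<^sub>R J (e 1)"
    "h (e 0) (e 1) = \<beta> *\<^sub>R J (e 0) + \<gamma> *\<^sub>R J (e 1)"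
    "h (e 1) (e 1) = \<gamma> *\<^sub>R J (e 0) + (3 * \<beta>) *\<^sub>R J (e 1)"
proof -
  let ?c = "cubic_coeff e"
  have n2: "2 \<le> n" using n by simp
  have sym12: "\<And>i j k. i < n \<Longrightarrow> j < n \<Longrightarrow> k < n \<Longrightarrow> ?c i j k = ?c j i k"
    and sym23: "\<And>i j k. i < n \<Longrightarrow> j < n \<Longrightarrow> k < n \<Longrightarrow> ?c i j k = ?c i k j"
    using cubic_coeff_sym12[OF e] cubic_coeff_sym23[OF e] by auto
  note D = ric_defect_eq_0D[OF n2 sym12 sym23 D]
  have c000: "?c 0 0 0 = 3 * ?c 1 1 0" using defect_JX_eq_0D[OF n2 D(1)] n by simp
  have "(real n - 1) * (\<Sum>i\<in>{1..<n}. ?c i i 1) = (real n + 1) * ?c 0 0 1"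
    using defect_Je_eq_0D(2)[OF n2 D(2)] n by simp
  then have c111: "?c 1 1 1 = 3 * ?c 0 0 1" using n by (simp add: numeral_2_eq_2)
  have expand: "h (e i) (e j) = ?c i j 0 *\<^sub>R J (e 0) + ?c i j 1 *\<^sub>R J (e 1)" if "i < 2" "j < 2" for i j
  proof -
    have "h (e i) (e j) = (\<Sum>k<n. ?c i j k *\<^sub>R J (e k))"
      unfolding cubic_coeff_def by (rule h_onb_expansion[OF e]) (use e n that in \<open>auto simp: onb_in\<close>)
    then show ?thesis using n by (simp add: numeral_2_eq_2)
  qed
  have "?c 0 1 0 = ?c 0 0 1" "?c 0 1 1 = ?c 1 1 0"
    using sym23[of 0 1 0] sym12[of 0 1 1] sym23[of 1 0 1] n by auto
  then show ?thesis
    using that[of "?c 1 1 0" "?c 0 0 1"] expand[of 0 0] expand[of 0 1] expand[of 1 1] c000 c111 by simp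
qed

lemma polar_form:
  fixes \<gamma> \<beta> :: real
  obtains \<mu> g b where "\<gamma> = \<mu> * g" "\<beta> = \<mu> * b" "g\<^sup>2 + b\<^sup>2 = 1"
proof (cases "\<gamma>\<^sup>2 + \<beta>\<^sup>2 = 0")
  case True
  then have "\<gamma> = 0" "\<beta> = 0" by (simp_all add: sum_power2_eq_zero_iff)
  then show ?thesis using that[of 0 1 0] by simp
next
  case False
  define \<mu> where "\<mu> = sqrt (\<gamma>\<^sup>2 + \<beta>\<^sup>2)"
  have \<mu>: "\<mu> \<noteq> 0" "\<mu>\<^sup>2 = \<gamma>\<^sup>2 + \<beta>\<^sup>2" using False by (simp_all add: \<mu>_def add_nonneg_nonneg)
  have "(\<gamma> / \<mu>)\<^sup>2 + (\<beta> / \<mu>)\<^sup>2 = (\<gamma>\<^sup>2 + \<beta>\<^sup>2) / \<mu>\<^sup>2"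
    by (simp add: power_divide add_divide_distrib)
  with \<mu> False have "\<gamma> = \<mu> * (\<gamma> / \<mu>)" "\<beta> = \<mu> * (\<beta> / \<mu>)" "(\<gamma> / \<mu>)\<^sup>2 + (\<beta> / \<mu>)\<^sup>2 = 1"
    by simp_all
  then show ?thesis by (rule that)
qed

text \<open>Rotating \<open>x\<close> towards \<open>\<gamma>x + \<beta>y\<close> diagonalises the shape \<open>(3\<gamma>, \<beta>, \<gamma>, 3\<beta>)\<close> of the cubic form.\<close>

lemma H_umbilical_3mu_if_cubic_shape:
  assumes x: "x \<in> L" and y: "y \<in> L"
    and orth: "inner x x = 1" "inner y y = 1" "inner x y = 0"
    and hxx: "h x x = (3 * \<gamma>) *\<^sub>R J x + \<beta> *\<^sub>R J y"
    and hxy: "h x y = \<beta> *\<^sub>R J x + \<gamma> *\<^sub>R J y"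
    and hyy: "h y y = \<gamma> *\<^sub>R J x + (3 * \<beta>) *\<^sub>R J y"
  shows "H_umbilical_3mu J L h"
proof -
  obtain \<mu> g b where gb: "\<gamma> = \<mu> * g" "\<beta> = \<mu> * b" and unit: "g\<^sup>2 + b\<^sup>2 = 1"
    by (rule polar_form)
  have h_comb: "h (p *\<^sub>R x + q *\<^sub>R y) (r *\<^sub>R x + s *\<^sub>R y)
      = (p * r * (3 * \<gamma>) + (p * s + q * r) * \<beta> + q * s * \<gamma>) *\<^sub>R J x
      + (p * r * \<beta> + (p * s + q * r) * \<gamma> + q * s * (3 * \<beta>)) *\<^sub>R J y" for p q r s
    unfolding h_combination[OF x y] hxx hxy hyy by (simp add: algebra_simps)
  have J_comb: "J (p *\<^sub>R x + q *\<^sub>R y) = p *\<^sub>R J x + q *\<^sub>R J y" for p q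
    by (simp add: linear_add[OF J_lin] linear_scale[OF J_lin])
  have inner_comb: "inner (p *\<^sub>R x + q *\<^sub>R y) (r *\<^sub>R x + s *\<^sub>R y) = p * r + q * s" for p q r s
    using orth by (simp add: inner_add_left inner_add_right inner_commute)
  have L_comb: "p *\<^sub>R x + q *\<^sub>R y \<in> L" for p q
    using x y L_sub by (simp add: subspace_add subspace_scale)
  have coeffs: "A *\<^sub>R u + B *\<^sub>R v = A' *\<^sub>R u + B' *\<^sub>R v" if "A = A'" "B = B'" for A B A' B' and u v :: 'a
    using that by simp
  let ?f1 = "g *\<^sub>R x + b *\<^sub>R y" and ?f2 = "(- b) *\<^sub>R x + g *\<^sub>R y"
  show ?thesis
    unfolding H_umbilical_3mu_def
  proof (intro exI conjI)
    show "?f1 \<in> L" "?f2 \<in> L" by (fact L_comb)+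
    show "norm ?f1 = 1" "norm ?f2 = 1" "inner ?f1 ?f2 = 0"
      unfolding norm_eq_1 inner_comb using unit by (simp_all add: power2_eq_square)
    show "h ?f1 ?f1 = (3 * \<mu>) *\<^sub>R J ?f1" "h ?f2 ?f2 = \<mu> *\<^sub>R J ?f1" "h ?f1 ?f2 = \<mu> *\<^sub>R J ?f2"
      unfolding h_comb J_comb scaleR_add_right scaleR_scaleR
      by (rule coeffs; use unit gb in algebra)+
  qed
qed

lemma H_umbilical_3mu_if_defect_zero_2:
  assumes n: "n = 2" and e: "onb L n e" and D: "ric_defect n (cubic_coeff e) = 0"
  shows "H_umbilical_3mu J L h"
proof -
  obtain \<gamma> \<beta> where shape: "h (e 0) (e 0) = (3 * \<gamma>) *\<^sub>R J (e 0) + \<beta> *\<^sub>R J (e 1)"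
    "h (e 0) (e 1) = \<beta> *\<^sub>R J (e 0) + \<gamma> *\<^sub>R J (e 1)"
    "h (e 1) (e 1) = \<gamma> *\<^sub>R J (e 0) + (3 * \<beta>) *\<^sub>R J (e 1)"
    using cubic_shape_if_defect_zero_2[OF assms] by blast
  show ?thesis
    by (rule H_umbilical_3mu_if_cubic_shape[OF _ _ _ _ _ shape]) (use e n in \<open>auto simp: onb_in onb_inner\<close>)
qed

text \<open>The witness is \<open>W = \<mu>e\<^sub>1\<close>: the cubic form of an \<open>H\<close>-umbilical point with \<open>\<lambda> = 3\<mu>\<close> is the
  symmetrisation of \<open>\<langle>x,y\<rangle>\<langle>W,z\<rangle>\<close>.\<close>

lemma cubic_form_if_H_umbilical_3mu:
  assumes n: "n = 2" and H: "H_umbilical_3mu J L h"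
  obtains W where "\<And>x y z. x \<in> L \<Longrightarrow> y \<in> L \<Longrightarrow> z \<in> L \<Longrightarrow>
    inner (h x y) (J z) = inner x y * inner W z + inner W x * inner y z + inner W y * inner x z"
proof -
  obtain f1 f2 \<mu> where f: "f1 \<in> L" "f2 \<in> L" "norm f1 = 1" "norm f2 = 1" "inner f1 f2 = 0"
    and hf: "h f1 f1 = (3 * \<mu>) *\<^sub>R J f1" "h f2 f2 = \<mu> *\<^sub>R J f1" "h f1 f2 = \<mu> *\<^sub>R J f2"
    using H unfolding H_umbilical_3mu_def by blast
  define W where "W = \<mu> *\<^sub>R f1"
  define f where "f i = (if i = 0 then f1 else f2)" for i :: nat
  have "inner f1 f1 = 1" "inner f2 f2 = 1" "inner f2 f1 = 0"
    using f by (simp_all add: norm_eq_1 inner_commute)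
  then have onb_f: "onb L n f" using f n unfolding onb_def f_def by auto
  have parseval: "inner x y = inner x f1 * inner f1 y + inner x f2 * inner f2 y" if "x \<in> L" for x y
    using onb_parseval[OF L_sub L_dim onb_f that, of y] n by (simp add: numeral_2_eq_2 f_def)
  have expansion: "x = inner x f1 *\<^sub>R f1 + inner x f2 *\<^sub>R f2" if "x \<in> L" for x
    using onb_expansion[OF L_sub L_dim onb_f that] n by (simp add: numeral_2_eq_2 f_def)
  have cubic: "inner (h x y) (J z) = inner x y * inner W z + inner W x * inner y z + inner W y * inner x z"
    if xyz: "x \<in> L" "y \<in> L" "z \<in> L" for x y z
  proof -
    let ?a1 = "inner x f1" and ?a2 = "inner x f2" and ?b1 = "inner y f1" and ?b2 = "inner y f2"
    have "h x y = h (?a1 *\<^sub>R f1 + ?a2 *\<^sub>R f2) (?b1 *\<^sub>R f1 + ?b2 *\<^sub>R f2)"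
      using expansion[OF xyz(1)] expansion[OF xyz(2)] by metis
    also have "\<dots> = (?a1 * ?b1) *\<^sub>R h f1 f1 + (?a1 * ?b2 + ?a2 * ?b1) *\<^sub>R h f1 f2 + (?a2 * ?b2) *\<^sub>R h f2 f2"
      by (rule h_combination[OF f(1,2)])
    finally have l: "inner (h x y) (J z) = ?a1 * ?b1 * (3 * \<mu>) * inner f1 z
        + (?a1 * ?b2 + ?a2 * ?b1) * \<mu> * inner f2 z + ?a2 * ?b2 * \<mu> * inner f1 z"
      using hf by (simp add: inner_add_left J_isom)
    have xy: "inner x y = ?a1 * ?b1 + ?a2 * ?b2" using parseval[OF xyz(1), of y] by (simp add: inner_commute)
    have yz: "inner y z = ?b1 * inner f1 z + ?b2 * inner f2 z" using parseval[OF xyz(2), of z] by simp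
    have xz: "inner x z = ?a1 * inner f1 z + ?a2 * inner f2 z" using parseval[OF xyz(1), of z] by simp
    have W: "inner W z = \<mu> * inner f1 z" "inner W x = \<mu> * ?a1" "inner W y = \<mu> * ?b1"
      by (simp_all add: W_def inner_commute)
    show ?thesis unfolding l xy yz xz W by (simp add: algebra_simps)
  qed
  then show ?thesis by (rule that)
qed

lemma ric_defect_zero_if_H_umbilical_3mu:
  assumes n: "n = 2" and H: "H_umbilical_3mu J L h" and e: "onb L n e"
  shows "ric_defect n (cubic_coeff e) = 0"
proof -
  obtain W where cubic: "\<And>x y z. x \<in> L \<Longrightarrow> y \<in> L \<Longrightarrow> z \<in> L \<Longrightarrow>
    inner (h x y) (J z) = inner x y * inner W z + inner W x * inner y z + inner W y * inner x z"
    using cubic_form_if_H_umbilical_3mu[OF n H] by blast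
  have L01: "e 0 \<in> L" "e 1 \<in> L" using e n by (auto simp: onb_in)
  have c: "cubic_coeff e i j k = inner (e i) (e j) * inner W (e k) + inner W (e i) * inner (e j) (e k)
      + inner W (e j) * inner (e i) (e k)" if "i \<in> {0, 1}" "j \<in> {0, 1}" "k \<in> {0, 1}" for i j k
    unfolding cubic_coeff_def by (rule cubic) (use that L01 in auto)
  have "inner (e i) (e j) = (if i = j then 1 else 0)" if "i \<in> {0, 1}" "j \<in> {0, 1}" for i j
    using e n that by (auto simp: onb_inner)
  then have "inner (e 0) (e 0) = 1" "inner (e 1) (e 1) = 1" "inner (e 0) (e 1) = 0" "inner (e 1) (e 0) = 0"
    by auto
  then show ?thesis
    using c[of 0 0 0] c[of 1 1 0] c[of 0 0 1] c[of 1 1 1] c[of 0 1 0] c[of 0 1 1]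
    unfolding n ric_defect_2 by (simp add: power2_eq_square algebra_simps)
qed

theorem Ric_le_ric_bound:
  fixes R :: "'a \<Rightarrow> 'a \<Rightarrow> 'a \<Rightarrow> 'a \<Rightarrow> real"
  assumes "2 \<le> n" "norm xi = 1"
    and "\<And>X Y Z W. X \<in> L \<Longrightarrow> Y \<in> L \<Longrightarrow> Z \<in> L \<Longrightarrow> W \<in> L \<Longrightarrow>
           R X Y Z W = Rbar a b c J xi X Y Z W + inner (h X W) (h Y Z) - inner (h X Z) (h Y W)"
    and "X \<in> L" "norm X = 1"
  shows "Ric L n R X \<le> ric_bound n a b c J xi L h X"
proof -
  obtain e where "onb L n e" "Ric L n R X = ric_bound n a b c J xi L h X - ric_defect n (cubic_coeff e)"
    using Ric_eq_bound_minus_defect[OF assms(1,2,4,5,3)] by blast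
  then show ?thesis using ric_defect_cubic_coeff_nonneg assms(1) by fastforce
qed

theorem Ric_eq_ric_bound_iff:
  fixes R :: "'a \<Rightarrow> 'a \<Rightarrow> 'a \<Rightarrow> 'a \<Rightarrow> real"
  assumes n2: "2 \<le> n" and xi: "norm xi = 1"
    and Gauss: "\<And>X Y Z W. X \<in> L \<Longrightarrow> Y \<in> L \<Longrightarrow> Z \<in> L \<Longrightarrow> W \<in> L \<Longrightarrow>
           R X Y Z W = Rbar a b c J xi X Y Z W + inner (h X W) (h Y Z) - inner (h X Z) (h Y W)"
  shows "(\<forall>X\<in>L. norm X = 1 \<longrightarrow> Ric L n R X = ric_bound n a b c J xi L h X)
    \<longleftrightarrow> totally_geodesic L h \<or> (n = 2 \<and> H_umbilical_3mu J L h)"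
    (is "?eq \<longleftrightarrow> ?shape")
proof
  assume eq: ?eq
  have zero: "\<exists>e. onb L n e \<and> e 0 = X \<and> ric_defect n (cubic_coeff e) = 0"
    if X: "X \<in> L" "norm X = 1" for X
  proof -
    obtain e where "onb L n e" "e 0 = X"
      "Ric L n R X = ric_bound n a b c J xi L h X - ric_defect n (cubic_coeff e)"
      using Ric_eq_bound_minus_defect[OF n2 xi X Gauss] by blast
    then show ?thesis using eq X by auto
  qed
  show ?shape
  proof (cases "n = 2")
    case True
    obtain e where "onb L n e" by (rule onb_exists[OF L_sub L_dim])
    then have "e 0 \<in> L" "norm (e 0) = 1" using n2 by (auto simp: onb_in onb_inner norm_eq_1)
    then obtain e' where "onb L n e'" "ric_defect n (cubic_coeff e') = 0" using zero by blast
    then show ?thesis using H_umbilical_3mu_if_defect_zero_2[OF True] True by blast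
  next
    case False
    then have "3 \<le> n" using n2 by simp
    then show ?thesis using totally_geodesic_if_defects_zero zero by blast
  qed
next
  assume shape: ?shape
  show ?eq
  proof (intro ballI impI)
    fix X assume X: "X \<in> L" "norm X = 1"
    obtain e where "onb L n e"
      "Ric L n R X = ric_bound n a b c J xi L h X - ric_defect n (cubic_coeff e)"
      using Ric_eq_bound_minus_defect[OF n2 xi X Gauss] by blast
    moreover have "ric_defect n (cubic_coeff e) = 0"
      using shape ric_defect_zero_if_totally_geodesic ric_defect_zero_if_H_umbilical_3mu \<open>onb L n e\<close>
      by blast
    ultimately show "Ric L n R X = ric_bound n a b c J xi L h X" by simp
  qed
qed

end

theorem theorem4p1:
  fixes J :: "'a::euclidean_space \<Rightarrow> 'a" and xi :: 'a and L :: "'a set" and n :: nat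
    and a b c :: real and h :: "'a \<Rightarrow> 'a \<Rightarrow> 'a" and R :: "'a \<Rightarrow> 'a \<Rightarrow> 'a \<Rightarrow> 'a \<Rightarrow> real"
  assumes n2: "n \<ge> 2"
    and dimM: "DIM('a) = 2 * n"
    and J_lin: "linear J"
    and J_sq: "\<And>x. J (J x) = - x"
    and J_isom: "\<And>x y. inner (J x) (J y) = inner x y"
    and xi_unit: "norm xi = 1"
    and L_sub: "subspace L"
    and L_dim: "dim L = n"
    and Lagr: "J ` L = {v. \<forall>x\<in>L. inner v x = 0}"
    and h_bil: "bilinear h"
    and h_sym: "\<And>X Y. X \<in> L \<Longrightarrow> Y \<in> L \<Longrightarrow> h X Y = h Y X"
    and h_normal: "\<And>X Y Z. X \<in> L \<Longrightarrow> Y \<in> L \<Longrightarrow> Z \<in> L \<Longrightarrow> inner (h X Y) Z = 0"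
    and h_cubic: "\<And>X Y Z. X \<in> L \<Longrightarrow> Y \<in> L \<Longrightarrow> Z \<in> L \<Longrightarrow>
                    inner (h X Y) (J Z) = inner (h X Z) (J Y)"
    and Gauss: "\<And>X Y Z W. X \<in> L \<Longrightarrow> Y \<in> L \<Longrightarrow> Z \<in> L \<Longrightarrow> W \<in> L \<Longrightarrow>
                  R X Y Z W = Rbar a b c J xi X Y Z W + inner (h X W) (h Y Z) - inner (h X Z) (h Y W)"
  shows "(\<forall>X\<in>L. norm X = 1 \<longrightarrow>
            Ric L n R X \<le> real (n - 1) / 4 * a
              + (1/8) * (real (n - 2) * ((eta xi X)\<^sup>2 + (eta_t J xi X)\<^sup>2) + 1) * b
              + (norm (eta xi X *\<^sub>R tproj L (J xi) - eta_t J xi X *\<^sub>R tproj L xi))\<^sup>2 * c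
              + real ((n - 1) * n) / 4 * (norm (mean_curv L n h))\<^sup>2)
       \<and> ((\<forall>X\<in>L. norm X = 1 \<longrightarrow>
            Ric L n R X = real (n - 1) / 4 * a
              + (1/8) * (real (n - 2) * ((eta xi X)\<^sup>2 + (eta_t J xi X)\<^sup>2) + 1) * b
              + (norm (eta xi X *\<^sub>R tproj L (J xi) - eta_t J xi X *\<^sub>R tproj L xi))\<^sup>2 * c
              + real ((n - 1) * n) / 4 * (norm (mean_curv L n h))\<^sup>2)
          \<longleftrightarrow> ((\<forall>X\<in>L. \<forall>Y\<in>L. h X Y = 0)
               \<or> (n = 2 \<and> (\<exists>e1 e2 \<mu>. e1 \<in> L \<and> e2 \<in> L \<and> norm e1 = 1 \<and> norm e2 = 1
                     \<and> inner e1 e2 = 0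
                     \<and> h e1 e1 = (3 * \<mu>) *\<^sub>R J e1 \<and> h e2 e2 = \<mu> *\<^sub>R J e1
                     \<and> h e1 e2 = \<mu> *\<^sub>R J e2))))"
proof -
  interpret lagrangian_subspace J L n h
    using J_lin J_sq J_isom L_sub L_dim Lagr h_bil h_sym h_normal h_cubic
    by (simp add: lagrangian_subspace_def)
  have "\<forall>X\<in>L. norm X = 1 \<longrightarrow> Ric L n R X \<le> ric_bound n a b c J xi L h X"
    using Ric_le_ric_bound[OF n2 xi_unit Gauss] by blast
  then show ?thesis
    using Ric_eq_ric_bound_iff[OF n2 xi_unit Gauss]
    unfolding ric_bound_def totally_geodesic_def H_umbilical_3mu_def by (rule conjI)
qed

end
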